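(* Let $p>3$ be prime, $t\in\{1,3,p,3p\}$, and $1\le r\le 3p-1$ with $\gcd(r,3p)=1$. Then \[\mathsf{c}(V_{3p},a_{3p,r,t})=\begin{cases}\gcd(3p,t) & \text{if } r=1,\\ 3+\frac{3(p-1)}{|r|_p} & \text{if } 1\ne r\equiv1\pmod 3\text{ and } t\in\{3,3p\},\\ 1+\frac{p-1}{|r|_p} & \text{if } 1\ne r\equiv 1\pmod3,\ t\in\{1,p\},\ 3\nmid|r|_p,\\ 1+\frac{3(p-1)}{|r|_p} & \text{if } 1\ne r\equiv1\pmod 3,\ t\in\{1,p\},\ 3\mid|r|_p,\\ 2\gcd(p,t) & \text{if } r\equiv 2\pmod 3\text{ and } r\equiv1\pmod p,\\ 2+\frac{2(p-1)}{|r|_p} & \text{if } r\equiv2\pmod3,\ r\not\equiv1\pmod p,\ |r|_p\text{ odd},\\ 2+\frac{3(p-1)}{|r|_p} & \text{if } r\equiv 2\pmod 3,\ r\not\equiv 1\pmod p,\ |r|_p\text{ even}.\end{cases}\]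
   Context: $\mathrm{D}_{6p}=\langle u,v\mid u^{3p}=1=v^2,\ vuv=u^{-1}\rangle$. For integers $r,t$ with $\gcd(r,3p)=1$, $a_{3p,r,t}$ is the automorphism of $\mathrm{D}_{6p}$ with $u^i\mapsto u^{ri}$, $u^jv\mapsto u^{rj+t}v$. $V_{3p}:=\{u^iv:0\le i\le 3p-1\}$, and $\mathsf{c}(V_{3p},a)$ is the number of cycles (including fixed points) of the permutation induced by $a$ on $V_{3p}$. $|r|_p$ is the multiplicative order of $r$ modulo $p$. *)

theory Defs
  imports "HOL-Number_Theory.Number_Theory"
begin

text \<open>Elements of D_{2n} = <u,v | u^n = 1 = v^2, v u v = u^{-1}> are encoded as
  pairs (i, b) with 0 \<le> i < n, standing for u^i (b = False) or u^i v (b = True).\<close>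

definition dihedral :: "nat \<Rightarrow> (nat \<times> bool) set" where
  "dihedral n = {0..<n} \<times> UNIV"

definition Vset :: "nat \<Rightarrow> (nat \<times> bool) set" where
  "Vset n = {0..<n} \<times> {True}"

definition aut :: "nat \<Rightarrow> nat \<Rightarrow> nat \<Rightarrow> nat \<times> bool \<Rightarrow> nat \<times> bool" where
  "aut n r t x = (if snd x then ((r * fst x + t) mod n, True) else ((r * fst x) mod n, False))"

definition num_cycles :: "('a \<Rightarrow> 'a) \<Rightarrow> 'a set \<Rightarrow> nat" where
  "num_cycles f A = card ((\<lambda>x. {(f ^^ k) x | k. True}) ` A)"

end

(* On V_{3p} the automorphism acts as the affine map y \<mapsto> r y + t on Z/3p, and the number of
   its cycles is the sum over all points of 1/(period of the point).  By the Chinese remainder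
   theorem the period of y is the lcm of its periods modulo 3 and modulo p.  Modulo a prime q the
   map is a translation by t when r = 1 (mod q), so every point has period q, or 1 if q divides t;
   otherwise it has exactly one fixed point, the root of (r - 1) y + t, and every other point has
   period ord q r.  Summing the resulting lcms over the 3p points gives the seven cases, using
   ord 3 r = 2 when r = 2 (mod 3). *)

theory Submission
  imports Defs "HOL-Combinatorics.Orbits"
begin

lemma card_orbit_eq_period:
  assumes "0 < L" and period: "\<And>k. (f ^^ k) x = x \<longleftrightarrow> L dvd k"
  shows "card (orbit f x) = L"
proof -
  have fixed: "(f ^^ L) x = x"
    using period by simp
  then have self: "x \<in> orbit f x"
    unfolding orbit_altdef using \<open>0 < L\<close> by force
  define d where "d = funpow_dist1 f x x"
  have "card (orbit f x) = d"
    using orbit_conv_funpow_dist1[OF self] inj_on_funpow_dist1[OF self]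
    by (simp add: d_def card_image)
  moreover have "d \<le> L"
    using funpow_dist1_le_self[OF fixed \<open>0 < L\<close> self] by (simp add: d_def)
  moreover have "L dvd d"
    using funpow_dist1_prop[OF self] period[of d] by (simp add: d_def)
  ultimately show ?thesis
    using dvd_imp_le[of L d] by (simp add: d_def)
qed

lemma card_image_eq_sum_inverse_card:
  fixes C :: "'a \<Rightarrow> 'a set"
  assumes "finite B"
    and self: "\<And>x. x \<in> B \<Longrightarrow> x \<in> C x"
    and closed: "\<And>x. x \<in> B \<Longrightarrow> C x \<subseteq> B"
    and same: "\<And>x y. x \<in> B \<Longrightarrow> y \<in> C x \<Longrightarrow> C y = C x"
  shows "real (card (C ` B)) = (\<Sum>x\<in>B. 1 / real (card (C x)))"
proof -
  have "(\<Sum>x\<in>B. 1 / real (card (C x))) =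
        (\<Sum>Q\<in>C ` B. \<Sum>x\<in>{x \<in> B. C x = Q}. 1 / real (card (C x)))"
    by (rule sum.image_gen[OF \<open>finite B\<close>])
  also have "\<dots> = (\<Sum>Q\<in>C ` B. 1)"
  proof (rule sum.cong[OF refl])
    fix Q assume "Q \<in> C ` B"
    then obtain y where y: "y \<in> B" "Q = C y" by auto
    then have "{x \<in> B. C x = Q} = Q"
      using self closed same by blast
    moreover have "finite Q" "Q \<noteq> {}"
      using y self closed \<open>finite B\<close> by (auto intro: finite_subset)
    moreover have "(\<Sum>x\<in>Q. 1 / real (card (C x))) = (\<Sum>x\<in>Q. 1 / real (card Q))"
      using y same by (intro sum.cong) auto
    ultimately show "(\<Sum>x\<in>{x \<in> B. C x = Q}. 1 / real (card (C x))) = 1"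
      by simp
  qed
  finally show ?thesis by simp
qed

lemma num_cycles_eq_sum_inverse_period:
  fixes per :: "'a \<Rightarrow> nat"
  assumes "finite B" and closed: "\<And>x. x \<in> B \<Longrightarrow> f x \<in> B"
    and pos: "\<And>x. x \<in> B \<Longrightarrow> 0 < per x"
    and period: "\<And>x k. x \<in> B \<Longrightarrow> (f ^^ k) x = x \<longleftrightarrow> per x dvd k"
  shows "real (num_cycles f B) = (\<Sum>x\<in>B. 1 / real (per x))"
proof -
  have self: "x \<in> orbit f x" if "x \<in> B" for x
    unfolding orbit_altdef using pos[OF that] period[OF that, of "per x"] by force
  have "(\<lambda>x. {(f ^^ k) x | k. True}) ` B = orbit f ` B"
    using orbit_altdef_self_in[OF self] by (intro image_cong) simp_all
  then have "num_cycles f B = card (orbit f ` B)"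
    by (simp add: num_cycles_def)
  also have "real \<dots> = (\<Sum>x\<in>B. 1 / real (card (orbit f x)))"
  proof (rule card_image_eq_sum_inverse_card[OF \<open>finite B\<close> self])
    have "(f ^^ k) x \<in> B" if "x \<in> B" for x k
      using that closed by (induction k) auto
    then show "orbit f x \<subseteq> B" if "x \<in> B" for x
      using that by (auto simp: orbit_altdef)
    show "orbit f y = orbit f x" if "x \<in> B" "y \<in> orbit f x" for x y
      using that self by (metis orbit_swap orbit_trans subsetI subset_antisym)
  qed
  also have "\<dots> = (\<Sum>x\<in>B. 1 / real (per x))"
    using card_orbit_eq_period[OF pos period] by simp
  finally show ?thesis .
qed

lemma cong_mult_right_prime_iff:
  fixes a b z q :: nat
  assumes "prime q"
  shows "[a * z = b * z] (mod q) \<longleftrightarrow> q dvd z \<or> [a = b] (mod q)"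
proof (cases "q dvd z")
  case True
  then have "[a * z = 0] (mod q)" "[b * z = 0] (mod q)"
    by (simp_all add: cong_0_iff)
  then show ?thesis
    using True by (meson cong_sym cong_trans)
next
  case False
  then have "coprime z q"
    using assms by (simp add: prime_imp_coprime coprime_commute)
  then show ?thesis
    using False by (simp add: cong_mult_rcancel_nat)
qed

lemma coprime_diff_one_if_not_cong_1:
  fixes r q :: nat
  assumes "prime q" "coprime r q" "\<not> [r = 1] (mod q)"
  shows "coprime (r - 1) q"
proof -
  have "1 \<le> r"
    using assms by (cases r) auto
  then have "\<not> q dvd r - 1"
    using assms(3) by (simp add: cong_altdef_nat)
  then show ?thesis
    using assms(1) by (simp add: prime_imp_coprime coprime_commute)
qed

lemma lcm_prime_left:
  fixes q d :: nat
  assumes "prime q"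
  shows "lcm q d = (if q dvd d then d else q * d)"
  using assms by (simp add: lcm_coprime prime_imp_coprime)

lemma ord_3_not_cong_1:
  fixes r :: nat
  assumes "coprime r 3" "\<not> [r = 1] (mod 3)"
  shows "ord 3 r = 2"
proof -
  have "\<not> 3 dvd r"
    using assms(1) coprime_common_divisor[of r 3 3] by auto
  moreover have "r mod 3 \<noteq> 1"
    using assms(2) by (simp add: cong_def)
  ultimately have "r mod 3 = 2"
    using mod_less_divisor[of 3 r] by (simp add: dvd_eq_mod_eq_0)
  then have "[r\<^sup>2 = 1] (mod 3)"
    by (simp add: cong_def power_mod[symmetric])
  then show ?thesis
    using assms by (simp add: ord_eq_2_iff)
qed

lemma bij_betw_mod_pair:
  fixes m n :: nat
  assumes "coprime m n"
  shows "bij_betw (\<lambda>x. (x mod m, x mod n)) {..<m * n} ({..<m} \<times> {..<n})"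
proof -
  have "inj_on (\<lambda>x. (x mod m, x mod n)) {..<m * n}"
  proof (rule inj_onI)
    fix x y assume "x \<in> {..<m * n}" "y \<in> {..<m * n}" "(x mod m, x mod n) = (y mod m, y mod n)"
    then show "x = y"
      using coprime_cong_mult_nat[OF _ _ assms, of x y] by (simp add: cong_def)
  qed
  moreover have "(\<lambda>x. (x mod m, x mod n)) ` {..<m * n} \<subseteq> {..<m} \<times> {..<n}"
    by (auto intro!: mod_less_divisor intro: gr0I)
  ultimately show ?thesis
    by (simp add: bij_betw_def card_subset_eq card_image card_cartesian_product)
qed

lemma bij_betw_affine_mod:
  fixes c t q :: nat
  assumes "coprime c q"
  shows "bij_betw (\<lambda>a. (c * a + t) mod q) {..<q} {..<q}"
proof -
  have "inj_on (\<lambda>a. (c * a + t) mod q) {..<q}"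
  proof (rule inj_onI)
    fix a b assume "a \<in> {..<q}" "b \<in> {..<q}" "(c * a + t) mod q = (c * b + t) mod q"
    then show "a = b"
      using assms by (simp add: cong_def[symmetric] cong_add_rcancel_nat cong_mult_lcancel_nat)
        (simp add: cong_def)
  qed
  moreover have "(\<lambda>a. (c * a + t) mod q) ` {..<q} \<subseteq> {..<q}"
    by (auto intro: gr0I)
  ultimately show ?thesis
    by (simp add: bij_betw_def endo_inj_surj)
qed

definition affine_period :: "nat \<Rightarrow> nat \<Rightarrow> nat \<Rightarrow> nat \<Rightarrow> nat" where
  "affine_period q r t x =
     (if [r = 1] (mod q) then (if q dvd t then 1 else q)
      else if q dvd (r - 1) * x + t then 1 else ord q r)"

lemma funpow_affine_linearize:
  fixes r t x :: nat
  assumes "1 \<le> r"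
  shows "(r - 1) * ((\<lambda>y. r * y + t) ^^ k) x + t = r ^ k * ((r - 1) * x + t)"
proof -
  obtain c where "r = c + 1"
    using assms by (metis le_add_diff_inverse2)
  then show ?thesis
    by (induction k) (simp_all add: algebra_simps)
qed

lemma funpow_affine_cong_translation:
  fixes r t x :: nat
  assumes "[r = 1] (mod q)"
  shows "[((\<lambda>y. r * y + t) ^^ k) x = x + k * t] (mod q)"
proof (induction k)
  case (Suc k)
  have "[r * ((\<lambda>y. r * y + t) ^^ k) x + t = 1 * (x + k * t) + t] (mod q)"
    using assms Suc by (intro cong_add cong_mult cong_refl)
  then show ?case
    by (simp add: algebra_simps)
qed simp

lemma funpow_affine_cong_self_iff:
  fixes r t x :: nat
  assumes "prime q" and "coprime r q"
  shows "[((\<lambda>y. r * y + t) ^^ k) x = x] (mod q) \<longleftrightarrow> affine_period q r t x dvd k"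
proof (cases "[r = 1] (mod q)")
  case True
  have "[((\<lambda>y. r * y + t) ^^ k) x = x] (mod q) \<longleftrightarrow> [x + k * t = x] (mod q)"
    using funpow_affine_cong_translation[OF True] cong_sym cong_trans by meson
  also have "\<dots> \<longleftrightarrow> q dvd k \<or> q dvd t"
    using \<open>prime q\<close> by (simp add: cong_add_lcancel_0_nat cong_0_iff prime_dvd_mult_iff)
  finally show ?thesis
    using True by (auto simp: affine_period_def)
next
  case False
  define z where "z = (r - 1) * x + t"
  have "1 \<le> r"
    using assms by (cases r) auto
  have "[((\<lambda>y. r * y + t) ^^ k) x = x] (mod q) \<longleftrightarrow>
      [(r - 1) * ((\<lambda>y. r * y + t) ^^ k) x + t = (r - 1) * x + t] (mod q)"
    using coprime_diff_one_if_not_cong_1[OF assms False]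
    by (simp add: cong_add_rcancel_nat cong_mult_lcancel_nat)
  also have "\<dots> \<longleftrightarrow> [r ^ k * z = 1 * z] (mod q)"
    unfolding funpow_affine_linearize[OF \<open>1 \<le> r\<close>] z_def by simp
  also have "\<dots> \<longleftrightarrow> q dvd z \<or> [r ^ k = 1] (mod q)"
    using \<open>prime q\<close> by (rule cong_mult_right_prime_iff)
  also have "\<dots> \<longleftrightarrow> q dvd z \<or> ord q r dvd k"
    by (simp add: ord_divides')
  finally show ?thesis
    using False by (auto simp: affine_period_def z_def)
qed

lemma affine_period_pos: "prime q \<Longrightarrow> coprime r q \<Longrightarrow> 0 < affine_period q r t x"
  by (auto simp: affine_period_def prime_gt_0_nat coprime_commute)

lemma affine_period_mod: "affine_period q r t (x mod q) = affine_period q r t x"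
proof -
  have "[(r - 1) * (x mod q) + t = (r - 1) * x + t] (mod q)"
    by (intro cong_add cong_mult cong_refl) (simp add: cong_def)
  then show ?thesis
    by (simp add: affine_period_def cong_dvd_iff)
qed

lemma funpow_affine_mod:
  fixes r t x n :: nat
  assumes "x < n"
  shows "((\<lambda>y. (r * y + t) mod n) ^^ k) x = ((\<lambda>y. r * y + t) ^^ k) x mod n"
  using assms by (induction k) (simp_all, metis mod_add_left_eq mod_mult_right_eq)

lemma funpow_affine_mod_self_iff:
  fixes r t x :: nat
  assumes "prime q\<^sub>1" "prime q\<^sub>2" "q\<^sub>1 \<noteq> q\<^sub>2" "coprime r (q\<^sub>1 * q\<^sub>2)" "x < q\<^sub>1 * q\<^sub>2"
  shows "((\<lambda>y. (r * y + t) mod (q\<^sub>1 * q\<^sub>2)) ^^ k) x = x \<longleftrightarrow>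
         lcm (affine_period q\<^sub>1 r t x) (affine_period q\<^sub>2 r t x) dvd k"
proof -
  let ?y = "((\<lambda>y. r * y + t) ^^ k) x"
  have "coprime q\<^sub>1 q\<^sub>2"
    using assms by (simp add: primes_coprime)
  then have "[?y = x] (mod q\<^sub>1 * q\<^sub>2) \<longleftrightarrow> [?y = x] (mod q\<^sub>1) \<and> [?y = x] (mod q\<^sub>2)"
    using coprime_cong_mult_nat cong_modulus_mult_nat[of _ _ q\<^sub>1 q\<^sub>2]
      cong_modulus_mult_nat[of _ _ q\<^sub>2 q\<^sub>1] by (metis mult.commute)
  moreover have "coprime r q\<^sub>1" "coprime r q\<^sub>2"
    using assms by simp_all
  ultimately show ?thesis
    using assms funpow_affine_cong_self_iff[of q\<^sub>1 r, where k = k]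
      funpow_affine_cong_self_iff[of q\<^sub>2 r, where k = k]
    by (simp add: funpow_affine_mod cong_def)
qed

lemma aut_funpow_Vset:
  "(aut n r t ^^ k) (x, True) = (((\<lambda>y. (r * y + t) mod n) ^^ k) x, True)"
  by (induction k) (simp_all add: aut_def)

lemma num_cycles_aut_Vset_eq_sum:
  fixes r t :: nat
  assumes "prime q\<^sub>1" "prime q\<^sub>2" "q\<^sub>1 \<noteq> q\<^sub>2" "coprime r (q\<^sub>1 * q\<^sub>2)"
  shows "real (num_cycles (aut (q\<^sub>1 * q\<^sub>2) r t) (Vset (q\<^sub>1 * q\<^sub>2))) =
    (\<Sum>a<q\<^sub>1. \<Sum>b<q\<^sub>2. 1 / real (lcm (affine_period q\<^sub>1 r t a) (affine_period q\<^sub>2 r t b)))"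
proof -
  let ?n = "q\<^sub>1 * q\<^sub>2"
  let ?g = "\<lambda>(a, b). 1 / real (lcm (affine_period q\<^sub>1 r t a) (affine_period q\<^sub>2 r t b))"
  have "0 < ?n"
    using assms by (simp add: prime_gt_0_nat)
  have "real (num_cycles (aut ?n r t) (Vset ?n)) =
      (\<Sum>z\<in>Vset ?n. 1 / real (lcm (affine_period q\<^sub>1 r t (fst z)) (affine_period q\<^sub>2 r t (fst z))))"
  proof (rule num_cycles_eq_sum_inverse_period)
    show "finite (Vset ?n)"
      by (simp add: Vset_def)
    fix z assume "z \<in> Vset ?n"
    then obtain x where z: "z = (x, True)" "x < ?n"
      by (auto simp: Vset_def)
    then show "aut ?n r t z \<in> Vset ?n"
      using \<open>0 < ?n\<close> by (simp add: aut_def Vset_def)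
    show "0 < lcm (affine_period q\<^sub>1 r t (fst z)) (affine_period q\<^sub>2 r t (fst z))"
      using assms by (simp add: affine_period_pos lcm_pos_nat)
    show "(aut ?n r t ^^ k) z = z \<longleftrightarrow>
        lcm (affine_period q\<^sub>1 r t (fst z)) (affine_period q\<^sub>2 r t (fst z)) dvd k" for k
      using funpow_affine_mod_self_iff[OF assms z(2)] z by (simp add: aut_funpow_Vset)
  qed
  also have "\<dots> = (\<Sum>x<?n. ?g (x mod q\<^sub>1, x mod q\<^sub>2))"
  proof -
    have "Vset ?n = (\<lambda>x. (x, True)) ` {..<?n}"
      by (auto simp: Vset_def)
    then show ?thesis
      by (simp add: sum.reindex inj_on_def affine_period_mod)
  qed
  also have "\<dots> = (\<Sum>z\<in>{..<q\<^sub>1} \<times> {..<q\<^sub>2}. ?g z)"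
    using assms by (intro sum.reindex_bij_betw bij_betw_mod_pair) (simp add: primes_coprime)
  also have "\<dots> = (\<Sum>a<q\<^sub>1. \<Sum>b<q\<^sub>2. ?g (a, b))"
    by (simp add: sum.cartesian_product)
  finally show ?thesis
    by simp
qed

lemma sum_affine_period_cong_1:
  fixes G :: "nat \<Rightarrow> 'a::semiring_1"
  assumes "[r = 1] (mod q)"
  shows "(\<Sum>a<q. G (affine_period q r t a)) = of_nat q * G (if q dvd t then 1 else q)"
  using assms by (simp add: affine_period_def)

lemma sum_affine_period_not_cong_1:
  fixes G :: "nat \<Rightarrow> 'a::semiring_1"
  assumes "prime q" "coprime r q" "\<not> [r = 1] (mod q)"
  shows "(\<Sum>a<q. G (affine_period q r t a)) = G 1 + of_nat (q - 1) * G (ord q r)"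
proof -
  let ?H = "\<lambda>y. G (if y = 0 then 1 else ord q r)"
  have "(\<Sum>a<q. G (affine_period q r t a)) = (\<Sum>a<q. ?H (((r - 1) * a + t) mod q))"
    using assms by (simp add: affine_period_def dvd_eq_mod_eq_0)
  also have "\<dots> = (\<Sum>y<q. ?H y)"
    using bij_betw_affine_mod[OF coprime_diff_one_if_not_cong_1[OF assms]]
    by (rule sum.reindex_bij_betw)
  also have "\<dots> = ?H 0 + (\<Sum>y\<in>{..<q} - {0}. ?H y)"
    using assms by (subst sum.remove[of _ 0]) (simp_all add: prime_gt_0_nat)
  also have "(\<Sum>y\<in>{..<q} - {0}. ?H y) = (\<Sum>y\<in>{..<q} - {0}. G (ord q r))"
    by (intro sum.cong) auto
  also have "\<dots> = of_nat (q - 1) * G (ord q r)"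
    using assms by (simp add: prime_gt_0_nat)
  finally show ?thesis
    by simp
qed

lemma
  fixes p :: nat
  assumes "prime p" "p > 3" "t \<in> {1, 3, p, 3 * p}"
  shows divisor_3p_dvd_3_iff: "3 dvd t \<longleftrightarrow> t \<in> {3, 3 * p}"
    and divisor_3p_dvd_p_iff: "p dvd t \<longleftrightarrow> t \<in> {p, 3 * p}"
proof -
  have "\<not> 3 dvd p"
  proof
    assume "3 dvd p"
    then show False
      using assms(1,2) primes_dvd_imp_eq[of 3 p] by simp
  qed
  moreover have "\<not> p dvd 3"
    using assms(2) by (meson dvd_imp_le not_le zero_less_numeral)
  moreover have "t = 1 \<or> t = 3 \<or> t = p \<or> t = 3 * p"
    using assms(3) by simp
  ultimately show "3 dvd t \<longleftrightarrow> t \<in> {3, 3 * p}" and "p dvd t \<longleftrightarrow> t \<in> {p, 3 * p}"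
    using assms(2) by (elim disjE; simp)+
qed

lemma num_cycles_aut_3p_translation:
  fixes p t :: nat
  assumes "prime p" "p > 3" "t \<in> {1, 3, p, 3 * p}"
  shows "real (num_cycles (aut (3 * p) 1 t) (Vset (3 * p))) = real (gcd (3 * p) t)"
proof -
  let ?e = "\<lambda>q. if q dvd t then 1 else q"
  have "(\<Sum>b<p. 1 / real (lcm L (affine_period p 1 t b))) = real p / real (lcm L (?e p))" for L
    using sum_affine_period_cong_1[where G = "\<lambda>M. 1 / real (lcm L M)"] by simp
  then have "real (num_cycles (aut (3 * p) 1 t) (Vset (3 * p))) =
      3 * real p / real (lcm (?e 3) (?e p))"
    using assms num_cycles_aut_Vset_eq_sum[of 3 p 1 t]
      sum_affine_period_cong_1[where G = "\<lambda>L. real p / real (lcm L (?e p))"] by simp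
  moreover have "lcm 3 p = 3 * p"
    using assms primes_coprime[of 3 p] by (simp add: lcm_coprime)
  ultimately show ?thesis
    using assms(2,3) divisor_3p_dvd_3_iff[OF assms] divisor_3p_dvd_p_iff[OF assms]
    by (elim insertE emptyE) simp_all
qed

lemma num_cycles_aut_3p_cong_1_mod_3:
  fixes p r t :: nat
  assumes "prime p" "p > 3" "t \<in> {1, 3, p, 3 * p}" "coprime r (3 * p)"
    and "[r = 1] (mod 3)" "\<not> [r = 1] (mod p)"
  shows "real (num_cycles (aut (3 * p) r t) (Vset (3 * p))) =
    (if t \<in> {3, 3 * p} then 3 + 3 * (real p - 1) / real (ord p r)
     else if \<not> 3 dvd ord p r then 1 + (real p - 1) / real (ord p r)
     else 1 + 3 * (real p - 1) / real (ord p r))"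
proof -
  let ?d = "ord p r"
  let ?e = "if 3 dvd t then 1 else 3"
  have "0 < ?d"
    using assms by (simp add: coprime_commute)
  have "real (p - 1) = real p - 1"
    using assms(2) by simp
  moreover have "(\<Sum>b<p. 1 / real (lcm L (affine_period p r t b))) =
      1 / real L + real (p - 1) / real (lcm L ?d)" for L
    using assms sum_affine_period_not_cong_1[where G = "\<lambda>M. 1 / real (lcm L M)"] by simp
  ultimately have count: "real (num_cycles (aut (3 * p) r t) (Vset (3 * p))) =
      3 * (1 / real ?e + (real p - 1) / real (lcm ?e ?d))"
    using assms num_cycles_aut_Vset_eq_sum[of 3 p r t]
      sum_affine_period_cong_1[where G = "\<lambda>L. 1 / real L + real (p - 1) / real (lcm L ?d)"] by simp
  show ?thesis
    unfolding count using \<open>0 < ?d\<close> divisor_3p_dvd_3_iff[OF assms(1-3)] lcm_prime_left[of 3 ?d]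
    by (cases "3 dvd ?d") (simp_all add: field_simps)
qed

lemma num_cycles_aut_3p_not_cong_1_mod_3:
  fixes p r t :: nat
  assumes "prime p" "p > 3" "t \<in> {1, 3, p, 3 * p}" "coprime r (3 * p)" "\<not> [r = 1] (mod 3)"
  shows "real (num_cycles (aut (3 * p) r t) (Vset (3 * p))) =
    (if [r = 1] (mod p) then 2 * real (gcd p t)
     else if odd (ord p r) then 2 + 2 * (real p - 1) / real (ord p r)
     else 2 + 3 * (real p - 1) / real (ord p r))"
proof -
  let ?S = "\<lambda>L. \<Sum>b<p. 1 / real (lcm L (affine_period p r t b))"
  have count: "real (num_cycles (aut (3 * p) r t) (Vset (3 * p))) = ?S 1 + 2 * ?S 2"
    using assms num_cycles_aut_Vset_eq_sum[of 3 p r t] ord_3_not_cong_1[of r]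
      sum_affine_period_not_cong_1[where G = ?S] by simp
  show ?thesis
  proof (cases "[r = 1] (mod p)")
    case True
    have inner: "?S L = real p / real (lcm L (if p dvd t then 1 else p))" for L
      using True sum_affine_period_cong_1[where G = "\<lambda>M. 1 / real (lcm L M)"] by simp
    moreover have "lcm 2 p = 2 * p"
      using assms primes_coprime[of 2 p] by (simp add: lcm_coprime)
    moreover have "gcd p t = (if p dvd t then p else 1)"
      using assms(1) by (cases "p dvd t") (simp_all add: coprime_imp_gcd_eq_1 prime_imp_coprime)
    ultimately show ?thesis
      unfolding count inner[of 1] inner[of 2] using True assms(2) by simp
  next
    case False
    let ?d = "ord p r"
    have "0 < ?d"
      using assms by (simp add: coprime_commute)
    have "real (p - 1) = real p - 1"
      using assms(2) by simp
    then have inner: "?S L = 1 / real L + (real p - 1) / real (lcm L ?d)" for L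
      using assms False sum_affine_period_not_cong_1[where G = "\<lambda>M. 1 / real (lcm L M)"] by simp
    then show ?thesis
      unfolding count inner[of 1] inner[of 2] using False \<open>0 < ?d\<close> lcm_prime_left[of 2 ?d]
      by (cases "even ?d") (simp_all add: field_simps)
  qed
qed

theorem lemma5p10:
  fixes p r t :: nat
  assumes "prime p" and "p > 3"
    and "t \<in> {1, 3, p, 3 * p}"
    and "1 \<le> r" and "r \<le> 3 * p - 1" and "coprime r (3 * p)"
  shows "real (num_cycles (aut (3 * p) r t) (Vset (3 * p))) =
    (if r = 1 then real (gcd (3 * p) t)
     else if [r = 1] (mod 3) then
       (if t \<in> {3, 3 * p} then 3 + 3 * (real p - 1) / real (ord p r)
        else if \<not> 3 dvd ord p r then 1 + (real p - 1) / real (ord p r)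
        else 1 + 3 * (real p - 1) / real (ord p r))
     else
       (if [r = 1] (mod p) then 2 * real (gcd p t)
        else if odd (ord p r) then 2 + 2 * (real p - 1) / real (ord p r)
        else 2 + 3 * (real p - 1) / real (ord p r)))"
proof -
  consider "r = 1" | "r \<noteq> 1" "[r = 1] (mod 3)" | "\<not> [r = 1] (mod 3)"
    by blast
  then show ?thesis
  proof cases
    case 1
    then show ?thesis
      using num_cycles_aut_3p_translation assms(1-3) by simp
  next
    case 2
    have "\<not> [r = 1] (mod p)"
    proof
      assume "[r = 1] (mod p)"
      then have "[r = 1] (mod 3 * p)"
        using 2 assms(1,2) coprime_cong_mult_nat primes_coprime[of 3 p] by simp
      then show False
        using 2 assms(4,5) by (simp add: cong_def)
    qed
    then show ?thesis
      using 2 num_cycles_aut_3p_cong_1_mod_3[OF assms(1-3,6)] by simp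
  next
    case 3
    then have "r \<noteq> 1"
      by auto
    then show ?thesis
      using 3 num_cycles_aut_3p_not_cong_1_mod_3[OF assms(1-3,6) 3] by simp
  qed
qed

end
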